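(* Let $k\ge 2$ and let $G_1,\dots,G_k$ be connected graphs, each with at least $3$ vertices, and let $G^*=G_1\Box G_2\Box\cdots\Box G_k$. Then $$rx_3(G^* )\le \sum_{i=1}^k rx_3(G_i).$$ Moreover, if $rx_3(G_i)=sdiam_3(G_i)$ for every $i$, then equality holds.
   Context: All graphs are finite, simple, undirected. An edge coloring may give adjacent edges the same color. A tree is rainbow if no two of its edges have the same color. For a connected graph $G$ on at least $3$ vertices, a $3$-rainbow coloring is an edge coloring such that every set of $3$ vertices is contained in some rainbow tree; $rx_3(G)$ is the minimum number of colors of a $3$-rainbow coloring. The Steiner distance $d(S)$ of a vertex set $S$ is the minimum number of edges of a tree containing $S$, and $sdiam_3(G)=\max\{d(S): S\subseteq V(G),|S|=3\}$. The Cartesian product $G\Box H$ has vertex set $V(G)\times V(H)$, with $(g_1,h_1)\sim(g_2,h_2)$ iff ($g_1=g_2$ and $h_1h_2\in E(H)$) or ($h_1=h_2$ and $g_1g_2\in E(G)$). *)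

theory Defs
  imports Main
begin

type_synonym 'a graph = "'a set \<times> 'a set set"

definition verts :: "'a graph \<Rightarrow> 'a set" where "verts G = fst G"
definition edges :: "'a graph \<Rightarrow> 'a set set" where "edges G = snd G"

definition simple_graph :: "'a graph \<Rightarrow> bool" where
  "simple_graph G \<longleftrightarrow> finite (verts G) \<and>
     (\<forall>e\<in>edges G. e \<subseteq> verts G \<and> card e = 2)"

definition adj :: "'a graph \<Rightarrow> 'a \<Rightarrow> 'a \<Rightarrow> bool" where
  "adj G u v \<longleftrightarrow> {u, v} \<in> edges G"

definition connected_graph :: "'a graph \<Rightarrow> bool" where
  "connected_graph G \<longleftrightarrow> verts G \<noteq> {} \<and>
     (\<forall>u\<in>verts G. \<forall>v\<in>verts G. (u, v) \<in> {(x, y). adj G x y}\<^sup>*)"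

definition is_cycle :: "'a graph \<Rightarrow> 'a list \<Rightarrow> bool" where
  "is_cycle G cs \<longleftrightarrow> length cs \<ge> 3 \<and> distinct cs \<and> set cs \<subseteq> verts G \<and>
     (\<forall>i < length cs. adj G (cs ! i) (cs ! ((i + 1) mod length cs)))"

definition acyclic_graph :: "'a graph \<Rightarrow> bool" where
  "acyclic_graph G \<longleftrightarrow> \<not> (\<exists>cs. is_cycle G cs)"

definition is_tree :: "'a graph \<Rightarrow> bool" where
  "is_tree T \<longleftrightarrow> simple_graph T \<and> connected_graph T \<and> acyclic_graph T"

definition subgraph :: "'a graph \<Rightarrow> 'a graph \<Rightarrow> bool" where
  "subgraph H G \<longleftrightarrow> verts H \<subseteq> verts G \<and> edges H \<subseteq> edges G"

definition rainbow :: "('a set \<Rightarrow> nat) \<Rightarrow> 'a graph \<Rightarrow> bool" where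
  "rainbow c T \<longleftrightarrow> inj_on c (edges T)"

definition three_rainbow_coloring :: "'a graph \<Rightarrow> ('a set \<Rightarrow> nat) \<Rightarrow> bool" where
  "three_rainbow_coloring G c \<longleftrightarrow>
     (\<forall>S. S \<subseteq> verts G \<and> card S = 3 \<longrightarrow>
        (\<exists>T. subgraph T G \<and> is_tree T \<and> rainbow c T \<and> S \<subseteq> verts T))"

definition rx3 :: "'a graph \<Rightarrow> nat" where
  "rx3 G = (LEAST n. \<exists>c. three_rainbow_coloring G c \<and> c ` edges G \<subseteq> {..<n})"

definition steiner_dist :: "'a graph \<Rightarrow> 'a set \<Rightarrow> nat" where
  "steiner_dist G S = (LEAST m. \<exists>T. subgraph T G \<and> is_tree T \<and> S \<subseteq> verts T \<and>
                                      card (edges T) = m)"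

definition sdiam3 :: "'a graph \<Rightarrow> nat" where
  "sdiam3 G = Max {steiner_dist G S | S. S \<subseteq> verts G \<and> card S = 3}"

text \<open>Binary product on pair vertices, and the iterated product
  G1 \<box> (G2 \<box> (\<dots> \<box> Gk)) of a list of graphs with vertices encoded as lists
  (the pair (x, xs) encoded as x # xs); the empty product is the one-vertex graph,
  which is a unit for \<box> up to isomorphism.\<close>
definition cart_prod :: "'a graph \<Rightarrow> 'b graph \<Rightarrow> ('a \<times> 'b) graph" where
  "cart_prod G H = (verts G \<times> verts H,
     {{(g1, h1), (g2, h2)} | g1 h1 g2 h2.
        g1 \<in> verts G \<and> g2 \<in> verts G \<and> h1 \<in> verts H \<and> h2 \<in> verts H \<and>
        ((g1 = g2 \<and> {h1, h2} \<in> edges H) \<or> (h1 = h2 \<and> {g1, g2} \<in> edges G))})"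

fun cart_prod_list :: "'a graph list \<Rightarrow> 'a list graph" where
  "cart_prod_list [] = ({[]}, {})"
| "cart_prod_list (G # Gs) =
     (let P = cart_prod G (cart_prod_list Gs); f = (\<lambda>(x, xs). x # xs)
      in (f ` verts P, (\<lambda>e. f ` e) ` edges P))"

end

theory Submission
  imports Defs "HOL-Library.Transitive_Closure_Table" "HOL-Library.Disjoint_Sets"
begin

text \<open>Call a coloring a median coloring if any three vertices are joined to a common vertex
  by three pairwise edge-disjoint edge sets whose union is rainbow.  On graphs with at least
  three vertices these are exactly the 3-rainbow colorings: a tree through the three
  vertices contains such a median, and conversely a spanning tree of the union of the three
  edge sets is a rainbow tree.  Median colorings of G and H with disjoint palettes combine into
  one of G \<box> H: each vertex walks inside its H-fibre to the H-median, then inside a G-fibre to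
  the G-median.  This gives the upper bound.  For the lower bound, a connected subgraph of
  G \<box> H projects onto connected subgraphs of G and H with at most as many edges altogether,
  so a tree through three vertices whose projections realise the Steiner 3-diameter in every
  factor has at least the sum of these diameters as edges, and a rainbow such tree needs that
  many colors.\<close>

lemma verts_pair [simp]: "verts (V, E) = V"
  by (simp add: verts_def)

lemma edges_pair [simp]: "edges (V, E) = E"
  by (simp add: edges_def)

lemma simple_graph_finite_edges: "simple_graph G \<Longrightarrow> finite (edges G)"
  unfolding simple_graph_def by (rule finite_subset[of _ "Pow (verts G)"]) auto

lemma simple_graph_edge_card: "simple_graph G \<Longrightarrow> e \<in> edges G \<Longrightarrow> card e = 2"
  unfolding simple_graph_def by auto

lemma simple_graph_edge_subset: "simple_graph G \<Longrightarrow> e \<in> edges G \<Longrightarrow> e \<subseteq> verts G"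
  unfolding simple_graph_def by auto

definition reach :: "'b set set \<Rightarrow> 'b \<Rightarrow> 'b \<Rightarrow> bool" where
  "reach E u v \<longleftrightarrow> (u, v) \<in> {(x, y). {x, y} \<in> E}\<^sup>*"

lemma reach_refl [simp]: "reach E u u"
  by (simp add: reach_def)

lemma reach_edge: "{u, v} \<in> E \<Longrightarrow> reach E u v"
  unfolding reach_def by (rule r_into_rtrancl) simp

lemma reach_trans: "reach E u v \<Longrightarrow> reach E v w \<Longrightarrow> reach E u w"
  unfolding reach_def by (rule rtrancl_trans)

lemma reach_mono: "reach E u v \<Longrightarrow> E \<subseteq> E' \<Longrightarrow> reach E' u v"
  unfolding reach_def by (erule rev_subsetD[OF _ rtrancl_mono]) auto

lemma reach_sym: "reach E u v \<Longrightarrow> reach E v u"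
  unfolding reach_def
proof (induction rule: rtrancl_induct)
  case (step y z)
  then have "(z, y) \<in> {(x, y). {x, y} \<in> E}\<^sup>*" by (auto simp: insert_commute)
  then show ?case using step(3) by (rule rtrancl_trans)
qed simp

lemma reach_lift:
  assumes "\<And>p q. {p, q} \<in> E \<Longrightarrow> reach E' p q" and "reach E u v"
  shows "reach E' u v"
  using assms(2) unfolding reach_def
proof (induction rule: rtrancl_induct)
  case (step y z)
  then show ?case using assms(1)[of y z] unfolding reach_def by (auto intro: rtrancl_trans)
qed simp

lemma reach_map:
  assumes "\<And>p q. {p, q} \<in> E \<Longrightarrow> f p = f q \<or> {f p, f q} \<in> E'" and "reach E u v"
  shows "reach E' (f u) (f v)"
  using assms(2) unfolding reach_def
proof (induction rule: rtrancl_induct)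
  case (step y z)
  then show ?case using assms(1)[of y z] by (auto intro: rtrancl_into_rtrancl)
qed simp

lemma reach_target_in_edges: "reach E u v \<Longrightarrow> v = u \<or> v \<in> \<Union>E"
  unfolding reach_def by (induction rule: rtrancl_induct) auto

lemma reach_closed: "reach E u v \<Longrightarrow> u \<in> V \<Longrightarrow> \<Union>E \<subseteq> V \<Longrightarrow> v \<in> V"
  using reach_target_in_edges[of E u v] by auto

lemma reach_restrict_to_component:
  assumes "reach E u m"
  shows "reach {e \<in> E. e \<subseteq> {v. reach E v m}} u m"
proof -
  have "(u, m) \<in> {(x, y). {x, y} \<in> E}\<^sup>*" using assms by (simp add: reach_def)
  then show ?thesis
  proof (induction rule: converse_rtrancl_induct)
    case (step u w)
    have e: "{u, w} \<in> E" using step(1) by simp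
    have w: "reach E w m" using step(2) by (simp add: reach_def)
    then have "{u, w} \<in> {e \<in> E. e \<subseteq> {v. reach E v m}}"
      using e reach_trans[OF reach_edge[OF e] w] by simp
    then show ?case using reach_trans[OF reach_edge step(3)] by blast
  qed simp
qed

lemma connected_graph_iff_reach:
  "connected_graph G \<longleftrightarrow> verts G \<noteq> {} \<and> (\<forall>u\<in>verts G. \<forall>v\<in>verts G. reach (edges G) u v)"
  unfolding connected_graph_def reach_def adj_def by simp

lemma connected_graph_image:
  assumes "connected_graph H" and "\<And>p q. {p, q} \<in> edges H \<Longrightarrow> f p = f q \<or> {f p, f q} \<in> E"
  shows "connected_graph (f ` verts H, E)"
  using assms reach_map[of "edges H" f E] unfolding connected_graph_iff_reach by auto

lemma distinct_doubleton_nth_eq: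
  assumes "distinct cs" "i < length cs" "j < length cs" "1 < length cs"
    and "{cs ! i, cs ! j} = {cs ! 0, cs ! 1}"
  shows "(i = 0 \<and> j = 1) \<or> (i = 1 \<and> j = 0)"
proof -
  have "(cs ! i = cs ! 0 \<and> cs ! j = cs ! 1) \<or> (cs ! i = cs ! 1 \<and> cs ! j = cs ! 0)"
    using assms(5) by (auto simp: doubleton_eq_iff)
  moreover have "0 < length cs" using assms(4) by linarith
  ultimately show ?thesis
    using nth_eq_iff_index_eq[OF assms(1)] assms(2-4) by metis
qed

lemma is_cycle_reach_without_first_edge:
  assumes "is_cycle G cs"
  shows "reach (edges G - {{cs ! 0, cs ! 1}}) (cs ! 1) (cs ! 0)"
proof -
  define n where "n = length cs"
  define E where "E = edges G - {{cs ! 0, cs ! 1}}"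
  have n3: "n \<ge> 3" and dist: "distinct cs"
    and cyc_edge: "\<And>i. i < n \<Longrightarrow> {cs ! i, cs ! ((i + 1) mod n)} \<in> edges G"
    using assms unfolding is_cycle_def n_def adj_def by auto
  have other_edge: "{cs ! i, cs ! ((i + 1) mod n)} \<in> E" if "1 \<le> i" "i < n" for i
  proof -
    have mod_less: "(i + 1) mod n < length cs"
      using n3 unfolding n_def by (intro mod_less_divisor) linarith
    have "{cs ! i, cs ! ((i + 1) mod n)} \<noteq> {cs ! 0, cs ! 1}"
    proof
      assume "{cs ! i, cs ! ((i + 1) mod n)} = {cs ! 0, cs ! 1}"
      then have "i = 1" "(i + 1) mod n = 0"
        using distinct_doubleton_nth_eq[OF dist _ mod_less] that n3 n_def by auto
      then show False using n3 by simp
    qed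
    then show ?thesis using cyc_edge that unfolding E_def by simp
  qed
  have along: "reach E (cs ! 1) (cs ! j)" if "1 \<le> j" "j < n" for j
    using that
  proof (induction j)
    case (Suc j)
    show ?case
    proof (cases "j = 0")
      case False
      then have "reach E (cs ! 1) (cs ! j)" using Suc by auto
      moreover have "{cs ! j, cs ! Suc j} \<in> E" using other_edge[of j] False Suc.prems by auto
      ultimately show ?thesis using reach_trans reach_edge by metis
    qed simp
  qed simp
  have "{cs ! (n - 1), cs ! 0} \<in> E" using other_edge[of "n - 1"] n3 by auto
  then have "reach E (cs ! 1) (cs ! 0)"
    using reach_trans[OF along[of "n - 1"] reach_edge] n3 by auto
  then show ?thesis unfolding E_def .
qed

lemma connected_graph_remove_cycle_edge:
  assumes "is_cycle G cs" and "connected_graph G"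
  shows "connected_graph (verts G, edges G - {{cs ! 0, cs ! 1}})"
proof -
  let ?E = "edges G - {{cs ! 0, cs ! 1}}"
  have r: "reach ?E (cs ! 1) (cs ! 0)" using assms(1) by (rule is_cycle_reach_without_first_edge)
  have "reach ?E p q" if "{p, q} \<in> edges G" for p q
  proof (cases "{p, q} = {cs ! 0, cs ! 1}")
    case True
    then show ?thesis using r reach_sym[OF r] by (auto simp: doubleton_eq_iff)
  next
    case False
    then show ?thesis using that by (intro reach_edge) simp
  qed
  then show ?thesis using assms(2) reach_lift[of "edges G" ?E]
    unfolding connected_graph_iff_reach by auto
qed

lemma spanning_tree_exists:
  assumes "simple_graph H" and "connected_graph H"
  shows "\<exists>T. is_tree T \<and> verts T = verts H \<and> edges T \<subseteq> edges H"
proof -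
  have "\<exists>T. is_tree T \<and> verts T = verts H \<and> edges T \<subseteq> edges H"
    if "E \<subseteq> edges H" "connected_graph (verts H, E)" for E
    using that
  proof (induction "card E" arbitrary: E rule: less_induct)
    case less
    have simple: "simple_graph (verts H, E)"
      using assms(1) less.prems(1) unfolding simple_graph_def by auto
    show ?case
    proof (cases "acyclic_graph (verts H, E)")
      case True
      then show ?thesis using simple less.prems unfolding is_tree_def
        by (intro exI[of _ "(verts H, E)"]) auto
    next
      case False
      then obtain cs where cs: "is_cycle (verts H, E) cs" unfolding acyclic_graph_def by auto
      then have "{cs ! 0, cs ! 1} \<in> E" unfolding is_cycle_def adj_def by force
      moreover have "finite E"
        using simple_graph_finite_edges[OF assms(1)] less.prems(1) finite_subset by blast
      ultimately have "card (E - {{cs ! 0, cs ! 1}}) < card E" by (meson card_Diff1_less)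
      then show ?thesis
        using less.hyps less.prems connected_graph_remove_cycle_edge[OF cs] by auto
    qed
  qed
  moreover have "(verts H, edges H) = H" by (simp add: verts_def edges_def)
  ultimately show ?thesis using assms(2) by fastforce
qed

lemma steiner_dist_le_connected_subgraph:
  assumes "subgraph H G" "simple_graph H" "connected_graph H" "S \<subseteq> verts H"
  shows "steiner_dist G S \<le> card (edges H)"
proof -
  obtain T where T: "is_tree T" "verts T = verts H" "edges T \<subseteq> edges H"
    using spanning_tree_exists[OF assms(2,3)] by blast
  have "steiner_dist G S \<le> card (edges T)"
    unfolding steiner_dist_def using T assms(1,4) unfolding subgraph_def
    by (intro Least_le exI[of _ T]) auto
  also have "\<dots> \<le> card (edges H)" using card_mono[OF simple_graph_finite_edges[OF assms(2)] T(3)] .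
  finally show ?thesis .
qed

section \<open>Medians of three vertices\<close>

fun path_edges :: "'b \<Rightarrow> 'b list \<Rightarrow> 'b set set" where
  "path_edges a [] = {}"
| "path_edges a (y # ys) = insert {a, y} (path_edges y ys)"

lemma reach_iff_rtrancl_path: "reach E u v \<longleftrightarrow> (\<exists>p. rtrancl_path (\<lambda>x y. {x, y} \<in> E) u p v)"
  unfolding reach_def rtranclp_eq_rtrancl_path[symmetric] rtranclp_rtrancl_eq ..

lemma path_edges_subset: "rtrancl_path (\<lambda>x y. {x, y} \<in> E) a p b \<Longrightarrow> path_edges a p \<subseteq> E"
  by (induction rule: rtrancl_path.induct) auto

lemma path_edges_subset_set: "e \<in> path_edges a p \<Longrightarrow> e \<subseteq> set (a # p)"
  by (induction a p rule: path_edges.induct) auto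

lemma reach_path_edges: "rtrancl_path R a p b \<Longrightarrow> reach (path_edges a p) a b"
proof (induction rule: rtrancl_path.induct)
  case (step x y ys z)
  have "reach (path_edges x (y # ys)) x y" by (rule reach_edge) simp
  moreover have "reach (path_edges x (y # ys)) y z" using step(3) by (rule reach_mono) auto
  ultimately show ?case by (rule reach_trans)
qed simp

lemma split_path_at:
  assumes "rtrancl_path R a p b" "distinct (a # p)" "m \<in> set (a # p)"
  shows "\<exists>E1 E2. E1 \<union> E2 \<subseteq> path_edges a p \<and> E1 \<inter> E2 = {} \<and> reach E1 a m \<and> reach E2 b m"
  using assms
proof (induction arbitrary: m rule: rtrancl_path.induct)
  case (base x)
  then show ?case by (intro exI[of _ "{}"]) auto
next
  case (step x y ys z)
  show ?case
  proof (cases "m = x")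
    case True
    have "reach (path_edges x (y # ys)) z x"
      using reach_sym[OF reach_path_edges[OF rtrancl_path.step[OF step(1,2)]]] .
    then show ?thesis using True by (intro exI[of _ "{}"] exI[of _ "path_edges x (y # ys)"]) auto
  next
    case False
    then have "distinct (y # ys)" "m \<in> set (y # ys)" using step.prems by auto
    then obtain E1 E2 where E: "E1 \<union> E2 \<subseteq> path_edges y ys" "E1 \<inter> E2 = {}"
      "reach E1 y m" "reach E2 z m" using step.IH by meson
    have "{x, y} \<notin> E2"
      using E(1) path_edges_subset_set[of "{x, y}" y ys] step.prems(1) by auto
    moreover have "reach (insert {x, y} E1) x m"
      using reach_trans[OF reach_edge[of x y] reach_mono[OF E(3)]] by auto
    ultimately show ?thesis using E by (intro exI[of _ "insert {x, y} E1"] exI[of _ E2]) auto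
  qed
qed

lemma reach_first_entry:
  assumes "reach E d v" "v \<in> W"
  shows "\<exists>m E'. m \<in> W \<and> E' \<subseteq> E \<and> (\<forall>e\<in>E'. \<not> e \<subseteq> W) \<and> reach E' d m"
proof -
  have "(d, v) \<in> {(x, y). {x, y} \<in> E}\<^sup>*" using assms(1) by (simp add: reach_def)
  then show ?thesis
  proof (induction rule: converse_rtrancl_induct)
    case base
    then show ?case using assms(2) by (intro exI[of _ v] exI[of _ "{}"]) simp
  next
    case (step d w)
    show ?case
    proof (cases "d \<in> W")
      case True
      then show ?thesis by (intro exI[of _ d] exI[of _ "{}"]) simp
    next
      case False
      from step.IH obtain m E' where m: "m \<in> W" "E' \<subseteq> E" "\<forall>e\<in>E'. \<not> e \<subseteq> W" "reach E' w m"
        by blast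
      have "{d, w} \<in> E" using step(1) by simp
      moreover have "reach (insert {d, w} E') d m"
        using reach_trans[OF reach_edge[of d w] reach_mono[OF m(4)]] by auto
      ultimately show ?thesis using m False by (intro exI[of _ m] exI[of _ "insert {d, w} E'"]) auto
    qed
  qed
qed

lemma reach_median:
  assumes "reach E a b" "reach E a d"
  shows "\<exists>m E1 E2 E3. E1 \<subseteq> E \<and> E2 \<subseteq> E \<and> E3 \<subseteq> E \<and>
     E1 \<inter> E2 = {} \<and> E1 \<inter> E3 = {} \<and> E2 \<inter> E3 = {} \<and>
     reach E1 a m \<and> reach E2 b m \<and> reach E3 d m"
proof -
  obtain p0 where "rtrancl_path (\<lambda>x y. {x, y} \<in> E) a p0 b"
    using assms(1) unfolding reach_iff_rtrancl_path by blast
  then obtain p where p: "rtrancl_path (\<lambda>x y. {x, y} \<in> E) a p b" "distinct (a # p)"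
    by (rule rtrancl_path_distinct) simp
  obtain m E3 where m: "m \<in> set (a # p)" "E3 \<subseteq> E" "\<forall>e\<in>E3. \<not> e \<subseteq> set (a # p)"
    "reach E3 d m" using reach_first_entry[OF reach_sym[OF assms(2)] list.set_intros(1)] by blast
  obtain E1 E2 where E: "E1 \<union> E2 \<subseteq> path_edges a p" "E1 \<inter> E2 = {}" "reach E1 a m" "reach E2 b m"
    using split_path_at[OF p m(1)] by blast
  have "e \<subseteq> set (a # p)" if "e \<in> E1 \<union> E2" for e
    using E(1) that by (intro path_edges_subset_set) blast
  then have "E1 \<inter> E3 = {}" "E2 \<inter> E3 = {}" using m(3) by (meson IntE UnCI equals0I)+
  moreover have "E1 \<subseteq> E" "E2 \<subseteq> E" using E(1) path_edges_subset[OF p(1)] by auto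
  ultimately show ?thesis using E(2-4) m(2,4) by blast
qed

section \<open>Median colorings\<close>

definition median_coloring :: "'b graph \<Rightarrow> ('b set \<Rightarrow> nat) \<Rightarrow> bool" where
  "median_coloring G c \<longleftrightarrow> (\<forall>t :: nat \<Rightarrow> 'b. (\<forall>i<3. t i \<in> verts G) \<longrightarrow>
     (\<exists>m F. (\<forall>i<3. F i \<subseteq> edges G \<and> reach (F i) (t i) m) \<and>
       disjoint_family_on F {..<3} \<and> inj_on c (\<Union>i<3. F i)))"

lemma three_rainbow_coloring_imp_median_coloring:
  assumes "simple_graph G" "card (verts G) \<ge> 3" "three_rainbow_coloring G c"
  shows "median_coloring G c"
  unfolding median_coloring_def
proof (intro allI impI)
  fix t :: "nat \<Rightarrow> _" assume t: "\<forall>i<3. t i \<in> verts G"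
  have "card {t 0, t 1, t 2} \<le> 3"
    by (rule order_trans[OF card_insert_le_m1]) (auto simp: card_insert_le_m1)
  then obtain S where S: "{t 0, t 1, t 2} \<subseteq> S" "S \<subseteq> verts G" "card S = 3"
    using exists_subset_between[of "{t 0, t 1, t 2}" 3 "verts G"] assms(1,2) t
    unfolding simple_graph_def by auto
  then obtain T where T: "subgraph T G" "is_tree T" "rainbow c T" "S \<subseteq> verts T"
    using assms(3) unfolding three_rainbow_coloring_def by blast
  then have r01: "reach (edges T) (t 0) (t 1)" and r02: "reach (edges T) (t 0) (t 2)"
    using S(1) unfolding is_tree_def connected_graph_iff_reach by auto
  obtain m E1 E2 E3 where E: "E1 \<subseteq> edges T" "E2 \<subseteq> edges T" "E3 \<subseteq> edges T"
    "E1 \<inter> E2 = {}" "E1 \<inter> E3 = {}" "E2 \<inter> E3 = {}"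
    "reach E1 (t 0) m" "reach E2 (t 1) m" "reach E3 (t 2) m"
    using reach_median[OF r01 r02] by blast
  define F where "F i = (if i = 0 then E1 else if i = 1 then E2 else E3)" for i :: nat
  have less_3: "i = 0 \<or> i = 1 \<or> i = 2" if "i < 3" for i :: nat using that by auto
  have EG: "edges T \<subseteq> edges G" using T(1) unfolding subgraph_def by simp
  have "\<forall>i<3. F i \<subseteq> edges G \<and> reach (F i) (t i) m"
  proof (intro allI impI)
    fix i :: nat assume "i < 3"
    then consider "i = 0" | "i = 1" | "i = 2" by linarith
    then show "F i \<subseteq> edges G \<and> reach (F i) (t i) m"
      by cases (use E EG in \<open>auto simp: F_def\<close>)
  qed
  moreover have "disjoint_family_on F {..<3}"
    unfolding disjoint_family_on_def lessThan_iff
    using E(4-6) by (auto dest!: less_3 simp: F_def)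
  moreover have "inj_on c (\<Union>i<3. F i)"
  proof (rule inj_on_subset)
    show "inj_on c (edges T)" using T(3) unfolding rainbow_def .
    show "(\<Union>i<3. F i) \<subseteq> edges T" using E(1-3) unfolding F_def by (intro UN_least) auto
  qed
  ultimately show "\<exists>m F. (\<forall>i<3. F i \<subseteq> edges G \<and> reach (F i) (t i) m) \<and>
      disjoint_family_on F {..<3} \<and> inj_on c (\<Union>i<3. F i)" by blast
qed

lemma tree_joining_common_vertex:
  assumes "simple_graph G" "EF \<subseteq> edges G" "S \<subseteq> verts G" "S \<noteq> {}"
    and "\<forall>v\<in>S. reach EF v m"
  shows "\<exists>T. subgraph T G \<and> is_tree T \<and> S \<subseteq> verts T \<and> edges T \<subseteq> EF"
proof -
  define V where "V = {v. reach EF v m}"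
  define E where "E = {e \<in> EF. e \<subseteq> V}"
  have UEF: "\<Union>EF \<subseteq> verts G" using assms(2) simple_graph_edge_subset[OF assms(1)] by blast
  obtain s where "s \<in> S" using assms(4) by blast
  then have mG: "m \<in> verts G" using reach_closed[OF _ _ UEF] assms(3,5) by blast
  have VG: "V \<subseteq> verts G"
  proof
    fix v assume "v \<in> V"
    then have "reach EF m v" unfolding V_def by (simp add: reach_sym)
    then show "v \<in> verts G" using reach_closed[OF _ mG UEF] by simp
  qed
  have reach_m: "reach E v m" if "v \<in> V" for v
    using reach_restrict_to_component[of EF v m] that unfolding E_def V_def by simp
  have "simple_graph (V, E)"
    unfolding simple_graph_def
  proof
    show "finite (verts (V, E))"
      using VG assms(1) unfolding simple_graph_def by (auto intro: finite_subset)
    show "\<forall>e\<in>edges (V, E). e \<subseteq> verts (V, E) \<and> card e = 2"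
      using assms(2) simple_graph_edge_card[OF assms(1)] unfolding E_def by auto
  qed
  moreover have "connected_graph (V, E)"
    unfolding connected_graph_iff_reach
  proof
    have "m \<in> V" unfolding V_def by simp
    then show "verts (V, E) \<noteq> {}" by auto
    show "\<forall>u\<in>verts (V, E). \<forall>v\<in>verts (V, E). reach (edges (V, E)) u v"
    proof (intro ballI)
      fix u v assume "u \<in> verts (V, E)" "v \<in> verts (V, E)"
      then show "reach (edges (V, E)) u v"
        using reach_trans[OF reach_m reach_sym[OF reach_m]] by simp
    qed
  qed
  ultimately obtain T where T: "is_tree T" "verts T = V" "edges T \<subseteq> E"
    using spanning_tree_exists[of "(V, E)"] by auto
  moreover have "S \<subseteq> V" using assms(5) unfolding V_def by blast
  ultimately show ?thesis
    using VG assms(2) unfolding subgraph_def E_def by (intro exI[of _ T]) auto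
qed

lemma median_coloring_imp_three_rainbow_coloring:
  assumes "simple_graph G" "median_coloring G c"
  shows "three_rainbow_coloring G c"
  unfolding three_rainbow_coloring_def
proof (intro allI impI)
  fix S assume S: "S \<subseteq> verts G \<and> card S = 3"
  then obtain x y z where xyz: "S = {x, y, z}" unfolding card_3_iff by blast
  define t where "t i = (if i = 0 then x else if i = 1 then y else z)" for i :: nat
  have "\<forall>i<3. t i \<in> verts G" using S xyz unfolding t_def by auto
  then obtain m F where F: "\<forall>i<3. F i \<subseteq> edges G \<and> reach (F i) (t i) m"
    "inj_on c (\<Union>i<3. F i)" using assms(2) unfolding median_coloring_def by blast
  have "reach (\<Union>i<3. F i) (t i) m" if "i < 3" for i
  proof (rule reach_mono)
    show "reach (F i) (t i) m" using F(1) that by blast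
    show "F i \<subseteq> (\<Union>i<3. F i)" using that by blast
  qed
  from this[of 0] this[of 1] this[of 2] have reach_m: "\<forall>v\<in>S. reach (\<Union>i<3. F i) v m"
    using xyz unfolding t_def by simp
  have "(\<Union>i<3. F i) \<subseteq> edges G" using F(1) by blast
  moreover have "S \<subseteq> verts G" "S \<noteq> {}" using S xyz by auto
  ultimately obtain T where "subgraph T G" "is_tree T" "S \<subseteq> verts T" "edges T \<subseteq> (\<Union>i<3. F i)"
    using tree_joining_common_vertex[OF assms(1) _ _ _ reach_m] by blast
  moreover have "rainbow c T" using F(2) calculation(4) unfolding rainbow_def by (rule inj_on_subset)
  ultimately show "\<exists>T. subgraph T G \<and> is_tree T \<and> rainbow c T \<and> S \<subseteq> verts T" by blast
qed

lemma three_rainbow_coloring_exists: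
  assumes "simple_graph G" "connected_graph G"
  shows "\<exists>c. three_rainbow_coloring G c \<and> c ` edges G \<subseteq> {..<card (edges G)}"
proof -
  obtain h where h: "bij_betw h (edges G) {0..<card (edges G)}"
    using ex_bij_betw_finite_nat[OF simple_graph_finite_edges[OF assms(1)]] by blast
  obtain T where T: "is_tree T" "verts T = verts G" "edges T \<subseteq> edges G"
    using spanning_tree_exists[OF assms] by blast
  have "subgraph T G" "rainbow h T"
    using T inj_on_subset[OF bij_betw_imp_inj_on[OF h] T(3)]
    unfolding subgraph_def rainbow_def by auto
  then have "three_rainbow_coloring G h"
    using T unfolding three_rainbow_coloring_def by blast
  moreover have "h ` edges G \<subseteq> {..<card (edges G)}" using bij_betw_imp_surj_on[OF h] by auto
  ultimately show ?thesis by blast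
qed

lemma rx3_attained:
  assumes "\<exists>n c. three_rainbow_coloring G c \<and> c ` edges G \<subseteq> {..<n}"
  shows "\<exists>c. three_rainbow_coloring G c \<and> c ` edges G \<subseteq> {..<rx3 G}"
  using assms unfolding rx3_def by (rule LeastI_ex)

lemma rainbow_tree_within_rx3:
  assumes "\<exists>n c. three_rainbow_coloring G c \<and> c ` edges G \<subseteq> {..<n}"
    and "S \<subseteq> verts G" "card S = 3"
  shows "\<exists>T. subgraph T G \<and> is_tree T \<and> S \<subseteq> verts T \<and> card (edges T) \<le> rx3 G"
proof -
  obtain c where c: "three_rainbow_coloring G c" "c ` edges G \<subseteq> {..<rx3 G}"
    using rx3_attained[OF assms(1)] by blast
  then obtain T where T: "subgraph T G" "is_tree T" "rainbow c T" "S \<subseteq> verts T"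
    using assms(2,3) unfolding three_rainbow_coloring_def by blast
  have "card (edges T) \<le> card {..<rx3 G}"
  proof (rule card_inj_on_le)
    show "inj_on c (edges T)" using T(3) unfolding rainbow_def .
    show "c ` edges T \<subseteq> {..<rx3 G}" using T(1) c(2) unfolding subgraph_def by blast
  qed simp
  then show ?thesis using T by (intro exI[of _ T]) auto
qed

lemma verts_cart_prod_list_Cons:
  "v \<in> verts (cart_prod_list (G # Gs)) \<longleftrightarrow>
     (\<exists>x xs. v = x # xs \<and> x \<in> verts G \<and> xs \<in> verts (cart_prod_list Gs))"
  by (auto simp: Let_def cart_prod_def verts_def)

lemma edges_cart_prod_list_Cons:
  "e \<in> edges (cart_prod_list (G # Gs)) \<longleftrightarrow>
   (\<exists>g1 h1 g2 h2. e = {g1 # h1, g2 # h2} \<and> g1 \<in> verts G \<and> g2 \<in> verts G \<and>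
      h1 \<in> verts (cart_prod_list Gs) \<and> h2 \<in> verts (cart_prod_list Gs) \<and>
      ((g1 = g2 \<and> {h1, h2} \<in> edges (cart_prod_list Gs)) \<or> (h1 = h2 \<and> {g1, g2} \<in> edges G)))"
  unfolding cart_prod_list.simps Let_def cart_prod_def edges_def[of "(_, _)"] snd_conv
  by (auto simp: image_iff) (metis (no_types, lifting) image_empty image_insert prod.simps(2))+

declare cart_prod_list.simps(2) [simp del]

lemma verts_cart_prod_list:
  "v \<in> verts (cart_prod_list Gs) \<longleftrightarrow>
     length v = length Gs \<and> (\<forall>i<length Gs. v ! i \<in> verts (Gs ! i))"
proof (induction Gs arbitrary: v)
  case Nil
  then show ?case by (simp add: verts_def)
next
  case (Cons G Gs)
  show ?case
  proof (cases v)
    case (Cons x xs)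
    then show ?thesis
      using Cons.IH[of xs] unfolding verts_cart_prod_list_Cons by (auto simp: All_less_Suc2)
  qed (simp add: verts_cart_prod_list_Cons)
qed

lemma edges_cart_prod_list_Cons_cases:
  assumes "e \<in> edges (cart_prod_list (G # Gs))" "simple_graph G"
  shows "(card (hd ` e) = 2 \<and> hd ` e \<in> edges G \<and> (\<exists>h. tl ` e = {h})) \<or>
         (card (hd ` e) = 1 \<and> tl ` e \<in> edges (cart_prod_list Gs))"
proof -
  obtain g1 h1 g2 h2 where e: "e = {g1 # h1, g2 # h2}"
      "(g1 = g2 \<and> {h1, h2} \<in> edges (cart_prod_list Gs)) \<or> (h1 = h2 \<and> {g1, g2} \<in> edges G)"
    using assms(1) unfolding edges_cart_prod_list_Cons by blast
  show ?thesis
  proof (cases "g1 = g2 \<and> {h1, h2} \<in> edges (cart_prod_list Gs)")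
    case True
    then show ?thesis using e(1) by auto
  next
    case False
    then have "h1 = h2" "{g1, g2} \<in> edges G" using e(2) by auto
    moreover have "card {g1, g2} = 2" using assms(2) calculation(2) by (rule simple_graph_edge_card)
    ultimately show ?thesis using e(1) by auto
  qed
qed

lemma simple_graph_cart_prod_list:
  assumes "\<forall>G\<in>set Gs. simple_graph G"
  shows "simple_graph (cart_prod_list Gs)"
  using assms
proof (induction Gs)
  case Nil
  then show ?case by (simp add: simple_graph_def verts_def edges_def)
next
  case (Cons G Gs)
  then have G: "simple_graph G" and R: "simple_graph (cart_prod_list Gs)" by auto
  have "verts (cart_prod_list (G # Gs)) = (\<lambda>(x, xs). x # xs) ` (verts G \<times> verts (cart_prod_list Gs))"
    by (simp add: cart_prod_list.simps Let_def cart_prod_def verts_def)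
  then have "finite (verts (cart_prod_list (G # Gs)))"
    using G R unfolding simple_graph_def by simp
  moreover have "e \<subseteq> verts (cart_prod_list (G # Gs)) \<and> card e = 2"
    if e: "e \<in> edges (cart_prod_list (G # Gs))" for e
  proof -
    obtain g1 h1 g2 h2 where gh: "e = {g1 # h1, g2 # h2}" "g1 \<in> verts G" "g2 \<in> verts G"
      "h1 \<in> verts (cart_prod_list Gs)" "h2 \<in> verts (cart_prod_list Gs)"
      using e unfolding edges_cart_prod_list_Cons by blast
    have "card (hd ` e) = 2 \<or> card (tl ` e) = 2"
      using edges_cart_prod_list_Cons_cases[OF e G] simple_graph_edge_card[OF R] by blast
    then have "g1 # h1 \<noteq> g2 # h2" using gh(1) by auto
    then show ?thesis using gh by (auto simp: verts_cart_prod_list_Cons)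
  qed
  ultimately show ?case unfolding simple_graph_def by blast
qed

section \<open>Median colorings of products\<close>

definition head_layer :: "'b list \<Rightarrow> 'b set set \<Rightarrow> 'b list set set" where
  "head_layer h E = (\<lambda>e. (\<lambda>v. v # h) ` e) ` E"

definition tail_layer :: "'b \<Rightarrow> 'b list set set \<Rightarrow> 'b list set set" where
  "tail_layer x F = (\<lambda>e. (#) x ` e) ` F"

lemma head_layer_edge:
  assumes "e \<in> head_layer h E" "E \<subseteq> edges G" "simple_graph G"
  shows "card (hd ` e) = 2 \<and> hd ` e \<in> E \<and> e = (\<lambda>v. v # h) ` hd ` e"
proof -
  obtain e0 where e0: "e0 \<in> E" "e = (\<lambda>v. v # h) ` e0"
    using assms(1) unfolding head_layer_def by blast
  have "hd ` e = e0" unfolding e0(2) image_image by simp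
  moreover have "card e0 = 2" using e0(1) assms(2,3) simple_graph_edge_card by blast
  ultimately show ?thesis using e0 by simp
qed

lemma tail_layer_edge:
  assumes "e \<in> tail_layer x F" "F \<subseteq> edges R" "simple_graph R"
  shows "card (hd ` e) = 1 \<and> tl ` e \<in> F \<and> e = (#) x ` tl ` e"
proof -
  obtain e0 where e0: "e0 \<in> F" "e = (#) x ` e0" using assms(1) unfolding tail_layer_def by blast
  have "tl ` e = e0" unfolding e0(2) image_image by simp
  moreover have "e0 \<noteq> {}" using e0(1) assms(2,3) simple_graph_edge_card by fastforce
  then have "hd ` e = {x}" unfolding e0(2) image_image by auto
  ultimately show ?thesis using e0 by simp
qed

lemma head_layer_subset_edges:
  assumes "simple_graph G" "E \<subseteq> edges G" "h \<in> verts (cart_prod_list Gs)"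
  shows "head_layer h E \<subseteq> edges (cart_prod_list (G # Gs))"
proof
  fix e assume "e \<in> head_layer h E"
  then obtain e0 where e0: "e0 \<in> edges G" "e = (\<lambda>v. v # h) ` e0"
    using assms(2) unfolding head_layer_def by blast
  then obtain x y where "e0 = {x, y}"
    using simple_graph_edge_card[OF assms(1)] card_2_iff by metis
  moreover have "x \<in> verts G" "y \<in> verts G"
    using simple_graph_edge_subset[OF assms(1) e0(1)] calculation by auto
  ultimately show "e \<in> edges (cart_prod_list (G # Gs))"
    using e0 assms(3) unfolding edges_cart_prod_list_Cons by auto
qed

lemma tail_layer_subset_edges:
  assumes "simple_graph (cart_prod_list Gs)" "F \<subseteq> edges (cart_prod_list Gs)" "x \<in> verts G"
  shows "tail_layer x F \<subseteq> edges (cart_prod_list (G # Gs))"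
proof
  fix e assume "e \<in> tail_layer x F"
  then obtain e0 where e0: "e0 \<in> edges (cart_prod_list Gs)" "e = (#) x ` e0"
    using assms(2) unfolding tail_layer_def by blast
  then obtain p q where "e0 = {p, q}"
    using simple_graph_edge_card[OF assms(1)] card_2_iff by metis
  moreover have "p \<in> verts (cart_prod_list Gs)" "q \<in> verts (cart_prod_list Gs)"
    using simple_graph_edge_subset[OF assms(1) e0(1)] calculation by auto
  ultimately show "e \<in> edges (cart_prod_list (G # Gs))"
    using e0 assms(3) unfolding edges_cart_prod_list_Cons by auto
qed

lemma reach_head_layer: "reach E u v \<Longrightarrow> reach (head_layer h E) (u # h) (v # h)"
proof (rule reach_map[where f = "\<lambda>v. v # h"])
  fix p q assume "{p, q} \<in> E"
  then have "(\<lambda>v. v # h) ` {p, q} \<in> head_layer h E" unfolding head_layer_def by (rule imageI)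
  then show "p # h = q # h \<or> {p # h, q # h} \<in> head_layer h E" by simp
qed

lemma reach_tail_layer: "reach F u v \<Longrightarrow> reach (tail_layer x F) (x # u) (x # v)"
proof (rule reach_map[where f = "(#) x"])
  fix p q assume "{p, q} \<in> F"
  then have "(#) x ` {p, q} \<in> tail_layer x F" unfolding tail_layer_def by (rule imageI)
  then show "x # p = x # q \<or> {x # p, x # q} \<in> tail_layer x F" by simp
qed

lemma layers_join_to_median:
  assumes "simple_graph G" "simple_graph (cart_prod_list Gs)"
    and "EG \<subseteq> edges G" "reach EG x mG" "ER \<subseteq> edges (cart_prod_list Gs)" "reach ER ys mR"
    and "x \<in> verts G" "mR \<in> verts (cart_prod_list Gs)"
  shows "head_layer mR EG \<union> tail_layer x ER \<subseteq> edges (cart_prod_list (G # Gs)) \<and>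
    reach (head_layer mR EG \<union> tail_layer x ER) (x # ys) (mG # mR)"
proof
  show "head_layer mR EG \<union> tail_layer x ER \<subseteq> edges (cart_prod_list (G # Gs))"
    using head_layer_subset_edges[OF assms(1,3,8)] tail_layer_subset_edges[OF assms(2,5,7)] by blast
  have "reach (head_layer mR EG \<union> tail_layer x ER) (x # ys) (x # mR)"
    using reach_mono[OF reach_tail_layer[OF assms(6)]] by blast
  moreover have "reach (head_layer mR EG \<union> tail_layer x ER) (x # mR) (mG # mR)"
    using reach_mono[OF reach_head_layer[OF assms(4)]] by blast
  ultimately show "reach (head_layer mR EG \<union> tail_layer x ER) (x # ys) (mG # mR)"
    by (rule reach_trans)
qed

text \<open>An edge of the product moves in the head coordinate iff its head projection has two
  elements; such edges take the colors of c1, the remaining ones those of c2 shifted by n.\<close>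

definition prod_coloring ::
    "nat \<Rightarrow> ('b set \<Rightarrow> nat) \<Rightarrow> ('b list set \<Rightarrow> nat) \<Rightarrow> 'b list set \<Rightarrow> nat" where
  "prod_coloring n c1 c2 e = (if card (hd ` e) = 2 then c1 (hd ` e) else n + c2 (tl ` e))"

lemma prod_coloring_range:
  assumes "simple_graph G" "c1 ` edges G \<subseteq> {..<n1}" "c2 ` edges (cart_prod_list Gs) \<subseteq> {..<n2}"
  shows "prod_coloring n1 c1 c2 ` edges (cart_prod_list (G # Gs)) \<subseteq> {..<n1 + n2}"
proof
  fix k assume "k \<in> prod_coloring n1 c1 c2 ` edges (cart_prod_list (G # Gs))"
  then obtain e where e: "e \<in> edges (cart_prod_list (G # Gs))" "k = prod_coloring n1 c1 c2 e"
    by blast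
  show "k \<in> {..<n1 + n2}"
    using edges_cart_prod_list_Cons_cases[OF e(1) assms(1)] assms(2,3) e(2)
    unfolding prod_coloring_def by fastforce
qed

lemma disjoint_family_on_layers:
  assumes "simple_graph G" "simple_graph R"
    and "\<forall>i\<in>I. FG i \<subseteq> edges G" "\<forall>i\<in>I. FR i \<subseteq> edges R"
    and "disjoint_family_on FG I" "disjoint_family_on FR I"
  shows "disjoint_family_on (\<lambda>i. head_layer h (FG i) \<union> tail_layer (x i) (FR i)) I"
  unfolding disjoint_family_on_def
proof (intro ballI impI equals0I)
  fix i j e assume ij: "i \<in> I" "j \<in> I" "i \<noteq> j"
    and e: "e \<in> (head_layer h (FG i) \<union> tail_layer (x i) (FR i)) \<inter>
             (head_layer h (FG j) \<union> tail_layer (x j) (FR j))"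
  note head = head_layer_edge[OF _ _ assms(1)] and tail = tail_layer_edge[OF _ _ assms(2)]
  have FG: "FG i \<subseteq> edges G" "FG j \<subseteq> edges G" and FR: "FR i \<subseteq> edges R" "FR j \<subseteq> edges R"
    using assms(3,4) ij by auto
  consider "e \<in> head_layer h (FG i)" "e \<in> head_layer h (FG j)"
    | "e \<in> head_layer h (FG i)" "e \<in> tail_layer (x j) (FR j)"
    | "e \<in> tail_layer (x i) (FR i)" "e \<in> head_layer h (FG j)"
    | "e \<in> tail_layer (x i) (FR i)" "e \<in> tail_layer (x j) (FR j)"
    using e by blast
  then show False
  proof cases
    case 1
    then have "hd ` e \<in> FG i \<inter> FG j" using head FG by blast
    then show False using assms(5) ij unfolding disjoint_family_on_def by blast
  next
    case 2
    then show False using head[OF 2(1) FG(1)] tail[OF 2(2) FR(2)] by simp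
  next
    case 3
    then show False using head[OF 3(2) FG(2)] tail[OF 3(1) FR(1)] by simp
  next
    case 4
    then have "tl ` e \<in> FR i \<inter> FR j" using tail FR by blast
    then show False using assms(6) ij unfolding disjoint_family_on_def by blast
  qed
qed

lemma prod_coloring_head_layer:
  assumes "e \<in> head_layer h E" "E \<subseteq> edges G" "simple_graph G" "c1 ` edges G \<subseteq> {..<n}"
  shows "prod_coloring n c1 c2 e = c1 (hd ` e) \<and> c1 (hd ` e) < n"
  using head_layer_edge[OF assms(1-3)] assms(2,4) unfolding prod_coloring_def by auto

lemma prod_coloring_tail_layer:
  assumes "e \<in> tail_layer x F" "F \<subseteq> edges R" "simple_graph R"
  shows "prod_coloring n c1 c2 e = n + c2 (tl ` e)"
  using tail_layer_edge[OF assms] unfolding prod_coloring_def by simp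

lemma inj_on_prod_coloring_layers:
  assumes "simple_graph G" "simple_graph R"
    and "\<forall>i\<in>I. FG i \<subseteq> edges G" "\<forall>i\<in>I. FR i \<subseteq> edges R" "disjoint_family_on FR I"
    and "c1 ` edges G \<subseteq> {..<n}" "inj_on c1 (\<Union>i\<in>I. FG i)" "inj_on c2 (\<Union>i\<in>I. FR i)"
  shows "inj_on (prod_coloring n c1 c2) (\<Union>i\<in>I. head_layer h (FG i) \<union> tail_layer (x i) (FR i))"
proof (rule inj_onI)
  let ?c = "prod_coloring n c1 c2"
  fix e e'
  assume "e \<in> (\<Union>i\<in>I. head_layer h (FG i) \<union> tail_layer (x i) (FR i))"
    and "e' \<in> (\<Union>i\<in>I. head_layer h (FG i) \<union> tail_layer (x i) (FR i))"
    and same_color: "?c e = ?c e'"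
  then obtain i j where ij: "i \<in> I" "j \<in> I"
    and "e \<in> head_layer h (FG i) \<union> tail_layer (x i) (FR i)"
    and "e' \<in> head_layer h (FG j) \<union> tail_layer (x j) (FR j)" by blast
  moreover have FG: "FG i \<subseteq> edges G" "FG j \<subseteq> edges G" and FR: "FR i \<subseteq> edges R" "FR j \<subseteq> edges R"
    using assms(3,4) ij by auto
  note head = head_layer_edge[OF _ _ assms(1)] and tail = tail_layer_edge[OF _ _ assms(2)]
    and color_head = prod_coloring_head_layer[OF _ _ assms(1,6)]
    and color_tail = prod_coloring_tail_layer[OF _ _ assms(2)]
  ultimately consider "e \<in> head_layer h (FG i)" "e' \<in> head_layer h (FG j)"
    | "e \<in> head_layer h (FG i)" "e' \<in> tail_layer (x j) (FR j)"
    | "e \<in> tail_layer (x i) (FR i)" "e' \<in> head_layer h (FG j)"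
    | "e \<in> tail_layer (x i) (FR i)" "e' \<in> tail_layer (x j) (FR j)" by blast
  then show "e = e'"
  proof cases
    case 1
    have "hd ` e \<in> (\<Union>i\<in>I. FG i)" "hd ` e' \<in> (\<Union>i\<in>I. FG i)"
      using head[OF 1(1) FG(1)] head[OF 1(2) FG(2)] ij by auto
    moreover have "c1 (hd ` e) = c1 (hd ` e')"
      using color_head[OF 1(1) FG(1)] color_head[OF 1(2) FG(2)] same_color by simp
    ultimately have "hd ` e = hd ` e'" using assms(7) by (metis inj_onD)
    then show ?thesis using head[OF 1(1) FG(1)] head[OF 1(2) FG(2)] by metis
  next
    case 2
    then show ?thesis using color_head[OF 2(1) FG(1)] color_tail[OF 2(2) FR(2)] same_color by simp
  next
    case 3
    then show ?thesis using color_tail[OF 3(1) FR(1)] color_head[OF 3(2) FG(2)] same_color by simp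
  next
    case 4
    have tl_e: "tl ` e \<in> FR i" "tl ` e' \<in> FR j"
      using tail[OF 4(1) FR(1)] tail[OF 4(2) FR(2)] by auto
    moreover have "c2 (tl ` e) = c2 (tl ` e')"
      using color_tail[OF 4(1) FR(1)] color_tail[OF 4(2) FR(2)] same_color by simp
    ultimately have "tl ` e = tl ` e'" using assms(8) ij by (meson UN_I inj_onD)
    moreover from this have "i = j"
      using tl_e assms(5) ij unfolding disjoint_family_on_def by (metis IntI empty_iff)
    ultimately show ?thesis using tail[OF 4(1) FR(1)] tail[OF 4(2) FR(2)] by metis
  qed
qed

lemma median_coloring_cart_prod_list_Cons:
  assumes "simple_graph G" "simple_graph (cart_prod_list Gs)" "c1 ` edges G \<subseteq> {..<n}"
    and "median_coloring G c1" "median_coloring (cart_prod_list Gs) c2"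
  shows "median_coloring (cart_prod_list (G # Gs)) (prod_coloring n c1 c2)"
  unfolding median_coloring_def
proof (intro allI impI)
  let ?R = "cart_prod_list Gs"
  fix t :: "nat \<Rightarrow> _" assume "\<forall>i<3. t i \<in> verts (cart_prod_list (G # Gs))"
  then have t: "t i = hd (t i) # tl (t i) \<and> hd (t i) \<in> verts G \<and> tl (t i) \<in> verts ?R"
    if "i < 3" for i
    using that unfolding verts_cart_prod_list_Cons by fastforce
  obtain mG FG where FG: "\<forall>i<3. FG i \<subseteq> edges G \<and> reach (FG i) (hd (t i)) mG"
    "disjoint_family_on FG {..<3}" "inj_on c1 (\<Union>i<3. FG i)"
    using assms(4)[unfolded median_coloring_def, THEN spec[of _ "\<lambda>i. hd (t i)"]] t by blast
  obtain mR FR where FR: "\<forall>i<3. FR i \<subseteq> edges ?R \<and> reach (FR i) (tl (t i)) mR"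
    "disjoint_family_on FR {..<3}" "inj_on c2 (\<Union>i<3. FR i)"
    using assms(5)[unfolded median_coloring_def, THEN spec[of _ "\<lambda>i. tl (t i)"]] t by blast
  have mR: "mR \<in> verts ?R"
  proof (rule reach_closed)
    show "reach (FR 0) (tl (t 0)) mR" "tl (t 0) \<in> verts ?R" using FR(1) t[of 0] by auto
    have "FR 0 \<subseteq> edges ?R" using FR(1) by simp
    then show "\<Union> (FR 0) \<subseteq> verts ?R" using simple_graph_edge_subset[OF assms(2)] by blast
  qed
  define F where "F i = head_layer mR (FG i) \<union> tail_layer (hd (t i)) (FR i)" for i
  have "F i \<subseteq> edges (cart_prod_list (G # Gs)) \<and> reach (F i) (t i) (mG # mR)" if "i < 3" for i
  proof -
    have FGi: "FG i \<subseteq> edges G" "reach (FG i) (hd (t i)) mG"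
      and FRi: "FR i \<subseteq> edges ?R" "reach (FR i) (tl (t i)) mR" using FG(1) FR(1) that by auto
    from layers_join_to_median[OF assms(1,2) FGi FRi _ mR] t[OF that] show ?thesis
      unfolding F_def by metis
  qed
  moreover have "disjoint_family_on F {..<3}"
    unfolding F_def using FG FR by (intro disjoint_family_on_layers[OF assms(1,2)]) auto
  moreover have "inj_on (prod_coloring n c1 c2) (\<Union>i<3. F i)"
    unfolding F_def using FG FR assms(3)
    by (intro inj_on_prod_coloring_layers[OF assms(1,2)]) auto
  ultimately show "\<exists>m F. (\<forall>i<3. F i \<subseteq> edges (cart_prod_list (G # Gs)) \<and> reach (F i) (t i) m) \<and>
      disjoint_family_on F {..<3} \<and> inj_on (prod_coloring n c1 c2) (\<Union>i<3. F i)"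
    by (intro exI[of _ "mG # mR"] exI[of _ F]) simp
qed

lemma median_coloring_cart_prod_list_Nil: "median_coloring (cart_prod_list []) c"
  unfolding median_coloring_def
  by (intro allI impI exI[of _ "[]"] exI[of _ "\<lambda>_. {}"]) (auto simp: verts_def edges_def disjoint_family_on_def)

lemma median_coloring_cart_prod_list:
  assumes "\<forall>G\<in>set Gs. simple_graph G \<and> connected_graph G \<and> card (verts G) \<ge> 3"
  shows "\<exists>c. c ` edges (cart_prod_list Gs) \<subseteq> {..<sum_list (map rx3 Gs)} \<and>
             median_coloring (cart_prod_list Gs) c"
  using assms
proof (induction Gs)
  case Nil
  then show ?case using median_coloring_cart_prod_list_Nil by (auto simp: edges_def)
next
  case (Cons G Gs)
  then have G: "simple_graph G" "connected_graph G" "card (verts G) \<ge> 3"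
    and R: "simple_graph (cart_prod_list Gs)"
    using simple_graph_cart_prod_list by auto
  obtain c1 where c1: "three_rainbow_coloring G c1" "c1 ` edges G \<subseteq> {..<rx3 G}"
    using rx3_attained three_rainbow_coloring_exists[OF G(1,2)] by blast
  obtain c2 where c2: "c2 ` edges (cart_prod_list Gs) \<subseteq> {..<sum_list (map rx3 Gs)}"
    "median_coloring (cart_prod_list Gs) c2"
    using Cons by auto
  have "median_coloring G c1"
    using G(1,3) c1(1) by (rule three_rainbow_coloring_imp_median_coloring)
  then show ?case
    using prod_coloring_range[OF G(1) c1(2) c2(1)]
      median_coloring_cart_prod_list_Cons[OF G(1) R c1(2) _ c2(2)]
    by (intro exI[of _ "prod_coloring (rx3 G) c1 c2"]) simp
qed

lemma three_rainbow_coloring_cart_prod_list: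
  assumes "\<forall>G\<in>set Gs. simple_graph G \<and> connected_graph G \<and> card (verts G) \<ge> 3"
  shows "\<exists>c. three_rainbow_coloring (cart_prod_list Gs) c \<and>
             c ` edges (cart_prod_list Gs) \<subseteq> {..<\<Sum>i<length Gs. rx3 (Gs ! i)}"
proof -
  obtain c where c: "c ` edges (cart_prod_list Gs) \<subseteq> {..<sum_list (map rx3 Gs)}"
    "median_coloring (cart_prod_list Gs) c"
    using median_coloring_cart_prod_list[OF assms] by blast
  have "simple_graph (cart_prod_list Gs)" using assms simple_graph_cart_prod_list by auto
  then have "three_rainbow_coloring (cart_prod_list Gs) c"
    using c(2) by (rule median_coloring_imp_three_rainbow_coloring)
  moreover have "sum_list (map rx3 Gs) = (\<Sum>i<length Gs. rx3 (Gs ! i))"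
    by (simp add: sum_list_sum_nth atLeast0LessThan)
  ultimately show ?thesis using c(1) by auto
qed

lemma rx3_cart_prod_list_le:
  assumes "\<forall>G\<in>set Gs. simple_graph G \<and> connected_graph G \<and> card (verts G) \<ge> 3"
  shows "rx3 (cart_prod_list Gs) \<le> (\<Sum>i<length Gs. rx3 (Gs ! i))"
  using three_rainbow_coloring_cart_prod_list[OF assms] unfolding rx3_def[of "cart_prod_list Gs"]
  by (rule Least_le)

section \<open>Steiner distances in products\<close>

definition head_proj :: "'b list graph \<Rightarrow> 'b graph" where
  "head_proj H = (hd ` verts H, (\<lambda>e. hd ` e) ` {e \<in> edges H. card (hd ` e) = 2})"

definition tail_proj :: "'b list graph \<Rightarrow> 'b list graph" where
  "tail_proj H = (tl ` verts H, (\<lambda>e. tl ` e) ` {e \<in> edges H. card (hd ` e) \<noteq> 2})"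

lemma card_edges_head_proj_tail_proj_le:
  assumes "finite (edges H)"
  shows "card (edges (head_proj H)) + card (edges (tail_proj H)) \<le> card (edges H)"
proof -
  let ?A = "{e \<in> edges H. card (hd ` e) = 2}" and ?B = "{e \<in> edges H. card (hd ` e) \<noteq> 2}"
  have "card (edges (head_proj H)) + card (edges (tail_proj H)) \<le> card ?A + card ?B"
    unfolding head_proj_def tail_proj_def by (simp add: add_mono card_image_le assms)
  also have "\<dots> = card (?A \<union> ?B)" using assms by (intro card_Un_disjoint[symmetric]) auto
  also have "?A \<union> ?B = edges H" by auto
  finally show ?thesis .
qed

lemma subgraph_head_proj:
  assumes "subgraph H (cart_prod_list (G # Gs))" "simple_graph G"
  shows "subgraph (head_proj H) G"
  unfolding subgraph_def
proof
  show "verts (head_proj H) \<subseteq> verts G"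
    using assms(1) unfolding subgraph_def head_proj_def by (force simp: verts_cart_prod_list_Cons)
  show "edges (head_proj H) \<subseteq> edges G"
    using assms(1) edges_cart_prod_list_Cons_cases[OF _ assms(2)]
    unfolding subgraph_def head_proj_def by fastforce
qed

lemma simple_graph_head_proj:
  assumes "simple_graph H"
  shows "simple_graph (head_proj H)"
  using assms unfolding simple_graph_def head_proj_def by auto

lemma connected_graph_head_proj:
  assumes "connected_graph H"
  shows "connected_graph (head_proj H)"
  unfolding head_proj_def
proof (rule connected_graph_image[OF assms])
  fix p q assume "{p, q} \<in> edges H"
  then show "hd p = hd q \<or> {hd p, hd q} \<in> (\<lambda>e. hd ` e) ` {e \<in> edges H. card (hd ` e) = 2}"
    by (cases "hd p = hd q") (auto intro!: image_eqI[of _ _ "{p, q}"])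
qed

lemma subgraph_tail_proj:
  assumes "subgraph H (cart_prod_list (G # Gs))" "simple_graph G"
  shows "subgraph (tail_proj H) (cart_prod_list Gs)"
  unfolding subgraph_def
proof
  show "verts (tail_proj H) \<subseteq> verts (cart_prod_list Gs)"
    using assms(1) unfolding subgraph_def tail_proj_def by (force simp: verts_cart_prod_list_Cons)
  show "edges (tail_proj H) \<subseteq> edges (cart_prod_list Gs)"
    using assms(1) edges_cart_prod_list_Cons_cases[OF _ assms(2)]
    unfolding subgraph_def tail_proj_def by fastforce
qed

lemma simple_graph_tail_proj:
  assumes "subgraph H (cart_prod_list (G # Gs))" "simple_graph G" "simple_graph H"
    and "simple_graph (cart_prod_list Gs)"
  shows "simple_graph (tail_proj H)"
  unfolding simple_graph_def
proof
  show "finite (verts (tail_proj H))" using assms(3) unfolding simple_graph_def tail_proj_def by simp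
  show "\<forall>e'\<in>edges (tail_proj H). e' \<subseteq> verts (tail_proj H) \<and> card e' = 2"
  proof
    fix e' assume e': "e' \<in> edges (tail_proj H)"
    then have "e' \<in> edges (cart_prod_list Gs)"
      using subgraph_tail_proj[OF assms(1,2)] unfolding subgraph_def by blast
    then have "card e' = 2" by (rule simple_graph_edge_card[OF assms(4)])
    moreover obtain e where "e \<in> edges H" "e' = tl ` e" using e' unfolding tail_proj_def by auto
    moreover from this(1) have "e \<subseteq> verts H" by (rule simple_graph_edge_subset[OF assms(3)])
    ultimately show "e' \<subseteq> verts (tail_proj H) \<and> card e' = 2" unfolding tail_proj_def by auto
  qed
qed

lemma connected_graph_tail_proj:
  assumes "subgraph H (cart_prod_list (G # Gs))" "simple_graph G" "connected_graph H"
  shows "connected_graph (tail_proj H)"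
  unfolding tail_proj_def
proof (rule connected_graph_image[OF assms(3)])
  fix p q assume pq: "{p, q} \<in> edges H"
  show "tl p = tl q \<or> {tl p, tl q} \<in> (\<lambda>e. tl ` e) ` {e \<in> edges H. card (hd ` e) \<noteq> 2}"
  proof (cases "card (hd ` {p, q}) = 2")
    case True
    have "{p, q} \<in> edges (cart_prod_list (G # Gs))" using pq assms(1) unfolding subgraph_def by blast
    from edges_cart_prod_list_Cons_cases[OF this assms(2)] True have "\<exists>h. tl ` {p, q} = {h}"
      by auto
    then show ?thesis by auto
  next
    case False
    then show ?thesis using pq by (auto intro!: image_eqI[of _ _ "{p, q}"])
  qed
qed

lemma sum_steiner_dist_projections_le:
  assumes "\<forall>G\<in>set Gs. simple_graph G" "subgraph H (cart_prod_list Gs)"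
    and "simple_graph H" "connected_graph H" "S \<subseteq> verts H"
  shows "(\<Sum>i<length Gs. steiner_dist (Gs ! i) ((\<lambda>v. v ! i) ` S)) \<le> card (edges H)"
  using assms
proof (induction Gs arbitrary: H S)
  case (Cons G Gs)
  then have G: "simple_graph G" and R: "simple_graph (cart_prod_list Gs)"
    using simple_graph_cart_prod_list by auto
  have S: "v = hd v # tl v" if "v \<in> S" for v
    using Cons.prems(2,5) that unfolding subgraph_def by (force simp: verts_cart_prod_list_Cons)
  then have "(\<lambda>v. v ! 0) ` S = hd ` S" "(\<lambda>v. v ! Suc i) ` S = (\<lambda>v. v ! i) ` tl ` S" for i
    unfolding image_image by (metis (no_types, lifting) image_cong nth_Cons_0 nth_Cons_Suc)+
  then have "(\<Sum>i<length (G # Gs). steiner_dist ((G # Gs) ! i) ((\<lambda>v. v ! i) ` S)) =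
      steiner_dist G (hd ` S) + (\<Sum>i<length Gs. steiner_dist (Gs ! i) ((\<lambda>v. v ! i) ` tl ` S))"
    by (simp add: sum.lessThan_Suc_shift del: sum.lessThan_Suc)
  also have "\<dots> \<le> card (edges (head_proj H)) + card (edges (tail_proj H))"
  proof (rule add_mono)
    show "steiner_dist G (hd ` S) \<le> card (edges (head_proj H))"
      using Cons.prems(5)
      by (intro steiner_dist_le_connected_subgraph subgraph_head_proj[OF Cons.prems(2) G]
          simple_graph_head_proj[OF Cons.prems(3)] connected_graph_head_proj[OF Cons.prems(4)])
        (auto simp: head_proj_def)
    show "(\<Sum>i<length Gs. steiner_dist (Gs ! i) ((\<lambda>v. v ! i) ` tl ` S)) \<le> card (edges (tail_proj H))"
      using Cons.prems(1,5)
      by (intro Cons.IH subgraph_tail_proj[OF Cons.prems(2) G]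
          simple_graph_tail_proj[OF Cons.prems(2) G Cons.prems(3) R]
          connected_graph_tail_proj[OF Cons.prems(2) G Cons.prems(4)])
        (auto simp: tail_proj_def)
  qed
  also have "\<dots> \<le> card (edges H)"
    using card_edges_head_proj_tail_proj_le simple_graph_finite_edges[OF Cons.prems(3)] .
  finally show ?case .
qed simp

lemma sdiam3_attained:
  assumes "simple_graph G" "card (verts G) \<ge> 3"
  shows "\<exists>x y z. {x, y, z} \<subseteq> verts G \<and> card {x, y, z} = 3 \<and> steiner_dist G {x, y, z} = sdiam3 G"
proof -
  have fin: "finite (verts G)" using assms(1) unfolding simple_graph_def by simp
  define A where "A = {S. S \<subseteq> verts G \<and> card S = 3}"
  have "finite A" unfolding A_def using fin by (auto intro: finite_subset[of _ "Pow (verts G)"])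
  moreover obtain S where "{} \<subseteq> S" "S \<subseteq> verts G" "card S = 3"
    using exists_subset_between[of "{}" 3 "verts G"] assms(2) fin by auto
  then have "A \<noteq> {}" unfolding A_def by blast
  moreover have "sdiam3 G = Max (steiner_dist G ` A)"
    unfolding sdiam3_def A_def by (rule arg_cong[of _ _ Max]) blast
  ultimately have "sdiam3 G \<in> steiner_dist G ` A" by simp
  then obtain S where "S \<subseteq> verts G" "card S = 3" "steiner_dist G S = sdiam3 G"
    unfolding A_def by auto
  then show ?thesis by (metis card_3_iff)
qed

lemma sdiam3_realised_in_cart_prod_list:
  assumes "Gs \<noteq> []" "\<forall>G\<in>set Gs. simple_graph G \<and> card (verts G) \<ge> 3"
  shows "\<exists>S. S \<subseteq> verts (cart_prod_list Gs) \<and> card S = 3 \<and>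
    (\<forall>i<length Gs. steiner_dist (Gs ! i) ((\<lambda>v. v ! i) ` S) = sdiam3 (Gs ! i))"
proof -
  let ?k = "length Gs"
  have "\<forall>i<?k. \<exists>x y z. {x, y, z} \<subseteq> verts (Gs ! i) \<and> card {x, y, z} = 3 \<and>
      steiner_dist (Gs ! i) {x, y, z} = sdiam3 (Gs ! i)"
  proof (intro allI impI)
    fix i assume "i < ?k"
    then have "simple_graph (Gs ! i)" "card (verts (Gs ! i)) \<ge> 3" using assms(2) nth_mem by blast+
    then show "\<exists>x y z. {x, y, z} \<subseteq> verts (Gs ! i) \<and> card {x, y, z} = 3 \<and>
        steiner_dist (Gs ! i) {x, y, z} = sdiam3 (Gs ! i)" by (rule sdiam3_attained)
  qed
  then obtain a b d where abd: "\<forall>i<?k. {a i, b i, d i} \<subseteq> verts (Gs ! i) \<and>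
      card {a i, b i, d i} = 3 \<and> steiner_dist (Gs ! i) {a i, b i, d i} = sdiam3 (Gs ! i)"
    by metis
  define S where "S = {map a [0..<?k], map b [0..<?k], map d [0..<?k]}"
  have proj: "(\<lambda>v. v ! i) ` S = {a i, b i, d i}" if "i < ?k" for i
    unfolding S_def using that by simp
  have "card S = 3"
  proof (rule antisym)
    show "card S \<le> 3"
      unfolding S_def by (rule order_trans[OF card_insert_le_m1]) (auto simp: card_insert_le_m1)
    have "3 = card ((\<lambda>v. v ! 0) ` S)" using proj[of 0] abd assms(1) by simp
    also have "\<dots> \<le> card S" by (rule card_image_le) (simp add: S_def)
    finally show "3 \<le> card S" .
  qed
  moreover have "S \<subseteq> verts (cart_prod_list Gs)" using abd by (auto simp: S_def verts_cart_prod_list)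
  ultimately show ?thesis using abd proj by (intro exI[of _ S]) simp
qed

lemma sum_sdiam3_le_rx3_cart_prod_list:
  assumes "Gs \<noteq> []"
    and "\<forall>G\<in>set Gs. simple_graph G \<and> connected_graph G \<and> card (verts G) \<ge> 3"
  shows "(\<Sum>i<length Gs. sdiam3 (Gs ! i)) \<le> rx3 (cart_prod_list Gs)"
proof -
  let ?P = "cart_prod_list Gs"
  obtain S where S: "S \<subseteq> verts ?P" "card S = 3"
    and proj: "\<forall>i<length Gs. steiner_dist (Gs ! i) ((\<lambda>v. v ! i) ` S) = sdiam3 (Gs ! i)"
    using sdiam3_realised_in_cart_prod_list[OF assms(1)] assms(2) by blast
  have "\<exists>n c. three_rainbow_coloring ?P c \<and> c ` edges ?P \<subseteq> {..<n}"
    using three_rainbow_coloring_cart_prod_list[OF assms(2)] by blast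
  then obtain T where T: "subgraph T ?P" "is_tree T" "S \<subseteq> verts T" "card (edges T) \<le> rx3 ?P"
    using rainbow_tree_within_rx3[OF _ S] by blast
  have "(\<Sum>i<length Gs. sdiam3 (Gs ! i)) = (\<Sum>i<length Gs. steiner_dist (Gs ! i) ((\<lambda>v. v ! i) ` S))"
    using proj by simp
  also have "\<dots> \<le> card (edges T)"
  proof (rule sum_steiner_dist_projections_le[OF _ T(1) _ _ T(3)])
    show "\<forall>G\<in>set Gs. simple_graph G" using assms(2) by blast
    show "simple_graph T" "connected_graph T" using T(2) unfolding is_tree_def by simp_all
  qed
  finally show ?thesis using T(4) by simp
qed

theorem theorem6:
  fixes Gs :: "'a graph list" and k :: nat
  assumes "k \<ge> 2" and "length Gs = k"
    and "\<forall>G\<in>set Gs. simple_graph G \<and> connected_graph G \<and> card (verts G) \<ge> 3"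
  shows "rx3 (cart_prod_list Gs) \<le> (\<Sum>i<k. rx3 (Gs ! i)) \<and>
         ((\<forall>i<k. rx3 (Gs ! i) = sdiam3 (Gs ! i)) \<longrightarrow>
          rx3 (cart_prod_list Gs) = (\<Sum>i<k. rx3 (Gs ! i)))"
proof -
  have upper: "rx3 (cart_prod_list Gs) \<le> (\<Sum>i<k. rx3 (Gs ! i))"
    using rx3_cart_prod_list_le[OF assms(3)] assms(2) by simp
  moreover have "rx3 (cart_prod_list Gs) = (\<Sum>i<k. rx3 (Gs ! i))"
    if "\<forall>i<k. rx3 (Gs ! i) = sdiam3 (Gs ! i)"
  proof -
    have "Gs \<noteq> []" using assms(1,2) by auto
    then have "(\<Sum>i<k. sdiam3 (Gs ! i)) \<le> rx3 (cart_prod_list Gs)"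
      using sum_sdiam3_le_rx3_cart_prod_list[OF _ assms(3)] assms(2) by simp
    then show ?thesis using upper that by simp
  qed
  ultimately show ?thesis by blast
qed

end
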